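(* In the stochastic epidemic model described in the context, let $u(k)=K\,I(k)$ for all $k\ge0$ with a constant gain $0\le K\le (1-d_{\max})/v_{\max}$. Then for every $k\ge1$, $$\mathbb{E}[D(k)]=\begin{cases}\dfrac{\overline{d_I}\,I_0\left(1-(1+\overline{\delta}-\overline{d_I}-K\overline{v})^k\right)}{K\overline{v}-\overline{\delta}+\overline{d_I}}, & K\overline{v}-\overline{\delta}+\overline{d_I}>0,\\[2mm] \overline{d_I}\,I_0\,k, & K\overline{v}-\overline{\delta}+\overline{d_I}=0.\end{cases}$$
   Context: Time is indexed by days $k=0,1,2,\dots$. Let $(\delta(k))_{k\ge0}$, $(d_I(k))_{k\ge0}$, $(v(k))_{k\ge0}$ be three mutually independent sequences of random variables, each sequence i.i.d. in $k$, with $0\le \delta(k)\le \delta_{\max}$, $0\le d_I(k)\le d_{\max}$ where $d_{\max}<1$, and $0<v_{\min}\le v(k)\le v_{\max}\le 1$. Write $\overline{\delta}=\mathbb{E}[\delta(k)]$, $\overline{d_I}=\mathbb{E}[d_I(k)]$, $\overline{v}=\mathbb{E}[v(k)]$. Given a control sequence $u(k)$, the cases evolve by $S(k+1)=S(k)-\delta(k)I(k)$, $I(k+1)=(1+\delta(k))I(k)-v(k)u(k)-d_I(k)I(k)$, $R(k+1)=R(k)+v(k)u(k)$, $D(k+1)=D(k)+d_I(k)I(k)$, with $S(0)=S_0$, $I(0)=I_0>0$, $R(0)=D(0)=0$, $I_0\delta_{\max}<S_0$. *)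

theory Defs
  imports "HOL-Probability.Probability"
begin

fun epi_I :: "(nat \<Rightarrow> 'a \<Rightarrow> real) \<Rightarrow> (nat \<Rightarrow> 'a \<Rightarrow> real) \<Rightarrow> (nat \<Rightarrow> 'a \<Rightarrow> real)
      \<Rightarrow> (nat \<Rightarrow> 'a \<Rightarrow> real) \<Rightarrow> real \<Rightarrow> nat \<Rightarrow> 'a \<Rightarrow> real" where
  "epi_I \<delta> dI v u I0 0 \<omega> = I0"
| "epi_I \<delta> dI v u I0 (Suc k) \<omega> =
     (1 + \<delta> k \<omega>) * epi_I \<delta> dI v u I0 k \<omega> - v k \<omega> * u k \<omega> - dI k \<omega> * epi_I \<delta> dI v u I0 k \<omega>"

fun epi_S :: "(nat \<Rightarrow> 'a \<Rightarrow> real) \<Rightarrow> (nat \<Rightarrow> 'a \<Rightarrow> real) \<Rightarrow> (nat \<Rightarrow> 'a \<Rightarrow> real)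
      \<Rightarrow> (nat \<Rightarrow> 'a \<Rightarrow> real) \<Rightarrow> real \<Rightarrow> real \<Rightarrow> nat \<Rightarrow> 'a \<Rightarrow> real" where
  "epi_S \<delta> dI v u S0 I0 0 \<omega> = S0"
| "epi_S \<delta> dI v u S0 I0 (Suc k) \<omega> = epi_S \<delta> dI v u S0 I0 k \<omega> - \<delta> k \<omega> * epi_I \<delta> dI v u I0 k \<omega>"

fun epi_R :: "(nat \<Rightarrow> 'a \<Rightarrow> real) \<Rightarrow> (nat \<Rightarrow> 'a \<Rightarrow> real) \<Rightarrow> nat \<Rightarrow> 'a \<Rightarrow> real" where
  "epi_R v u 0 \<omega> = 0"
| "epi_R v u (Suc k) \<omega> = epi_R v u k \<omega> + v k \<omega> * u k \<omega>"

fun epi_D :: "(nat \<Rightarrow> 'a \<Rightarrow> real) \<Rightarrow> (nat \<Rightarrow> 'a \<Rightarrow> real) \<Rightarrow> (nat \<Rightarrow> 'a \<Rightarrow> real)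
      \<Rightarrow> (nat \<Rightarrow> 'a \<Rightarrow> real) \<Rightarrow> real \<Rightarrow> nat \<Rightarrow> 'a \<Rightarrow> real" where
  "epi_D \<delta> dI v u I0 0 \<omega> = 0"
| "epi_D \<delta> dI v u I0 (Suc k) \<omega> = epi_D \<delta> dI v u I0 k \<omega> + dI k \<omega> * epi_I \<delta> dI v u I0 k \<omega>"

datatype coef = Cdelta nat | CdI nat | Cv nat

fun coef_family :: "(nat \<Rightarrow> 'a \<Rightarrow> real) \<Rightarrow> (nat \<Rightarrow> 'a \<Rightarrow> real) \<Rightarrow> (nat \<Rightarrow> 'a \<Rightarrow> real)
      \<Rightarrow> coef \<Rightarrow> 'a \<Rightarrow> real" where
  "coef_family \<delta> dI v (Cdelta k) = \<delta> k"
| "coef_family \<delta> dI v (CdI k) = dI k"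
| "coef_family \<delta> dI v (Cv k) = v k"

end

theory Submission
  imports Defs
begin

text \<open>Under the feedback \<open>u(k) = K I(k)\<close> the infections evolve as
  \<open>I(k+1) = f(k) I(k)\<close> with the daily factor \<open>f(k) = 1 + \<delta>(k) - K v(k) - d\<^sub>I(k)\<close>,
  so \<open>I(k) = I\<^sub>0 \<Prod>\<^sub>i\<^sub><\<^sub>k f(i)\<close> and \<open>D(k) = \<Sum>\<^sub>j\<^sub><\<^sub>k d\<^sub>I(j) I(j)\<close>. Every summand is a
  product of functions of the coefficients of distinct days, which are independent, so
  its expectation factors into \<open>\<overline>d\<^sub>I I\<^sub>0 a\<^sup>j\<close> with \<open>a = 1 + \<overline>\<delta> - \<overline>d\<^sub>I - K \<overline>v\<close>;
  summing the geometric series gives the formula.\<close>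

definition daily_factor ::
    "real \<Rightarrow> (nat \<Rightarrow> 'a \<Rightarrow> real) \<Rightarrow> (nat \<Rightarrow> 'a \<Rightarrow> real) \<Rightarrow> (nat \<Rightarrow> 'a \<Rightarrow> real)
      \<Rightarrow> nat \<Rightarrow> 'a \<Rightarrow> real" where
  "daily_factor K \<delta> dI v k \<omega> = 1 + \<delta> k \<omega> - K * v k \<omega> - dI k \<omega>"

lemma epi_I_linear_feedback:
  assumes "\<And>k \<omega>. u k \<omega> = K * epi_I \<delta> dI v u I0 k \<omega>"
  shows "epi_I \<delta> dI v u I0 k \<omega> = I0 * (\<Prod>i<k. daily_factor K \<delta> dI v i \<omega>)"
proof (induction k)
  case (Suc k)
  have "epi_I \<delta> dI v u I0 (Suc k) \<omega> = daily_factor K \<delta> dI v k \<omega> * epi_I \<delta> dI v u I0 k \<omega>"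
    by (simp only: epi_I.simps assms[of k \<omega>]) (simp add: daily_factor_def algebra_simps)
  with Suc show ?case
    by (simp add: mult.commute mult.left_commute)
qed simp

lemma epi_D_eq_sum: "epi_D \<delta> dI v u I0 k \<omega> = (\<Sum>j<k. dI j \<omega> * epi_I \<delta> dI v u I0 j \<omega>)"
  by (induction k) simp_all

lemma integral_eq_if_distr_eq:
  fixes X Y :: "'a \<Rightarrow> real"
  assumes "X \<in> borel_measurable M" "Y \<in> borel_measurable M"
    and "distr M borel X = distr M borel Y"
  shows "integral\<^sup>L M X = integral\<^sup>L M Y"
proof -
  have "integral\<^sup>L M X = integral\<^sup>L (distr M borel X) (\<lambda>x. x)"
    using assms(1) by (simp add: integral_distr)
  also have "\<dots> = integral\<^sup>L M Y"
    using assms(2,3) by (simp add: integral_distr)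
  finally show ?thesis .
qed

lemma (in prob_space) indep_vars_compose_restrict:
  assumes "indep_vars M' X I" "\<And>j. j \<in> L \<Longrightarrow> K j \<subseteq> I" "disjoint_family_on K L"
    and "\<And>j. j \<in> L \<Longrightarrow> g j \<in> measurable (PiM (K j) M') (N j)"
  shows "indep_vars N (\<lambda>j \<omega>. g j (restrict (\<lambda>i. X i \<omega>) (K j))) L"
  by (rule indep_vars_compose2[OF indep_vars_restrict]) (use assms in auto)

context prob_space
begin

context
  fixes \<delta> dI v :: "nat \<Rightarrow> 'a \<Rightarrow> real"
  assumes indep_coef: "indep_vars (\<lambda>_. borel) (coef_family \<delta> dI v) UNIV"
begin

lemma coef_measurable:
  "\<delta> k \<in> borel_measurable M" "dI k \<in> borel_measurable M" "v k \<in> borel_measurable M"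
proof -
  have "coef_family \<delta> dI v c \<in> borel_measurable M" for c
    using indep_coef by (simp add: indep_vars_def)
  from this[of "Cdelta k"] this[of "CdI k"] this[of "Cv k"] show
    "\<delta> k \<in> borel_measurable M" "dI k \<in> borel_measurable M" "v k \<in> borel_measurable M"
    by simp_all
qed

lemma indep_vars_days: "indep_vars (\<lambda>_. borel) (\<lambda>k \<omega>. (\<delta> k \<omega>, dI k \<omega>, v k \<omega>)) UNIV"
proof -
  define day where "day k = {Cdelta k, CdI k, Cv k}" for k
  define coords where "coords k x = (x (Cdelta k), x (CdI k), x (Cv k))" for k and x :: "coef \<Rightarrow> real"
  have "disjoint_family_on day UNIV"
    by (auto simp: disjoint_family_on_def day_def)
  moreover have "coords k \<in> borel_measurable (PiM (day k) (\<lambda>_. borel))" for k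
    unfolding coords_def
    by (intro borel_measurable_Pair measurable_component_singleton) (auto simp: day_def)
  ultimately have "indep_vars (\<lambda>_. borel)
      (\<lambda>k \<omega>. coords k (restrict (\<lambda>c. coef_family \<delta> dI v c \<omega>) (day k))) UNIV"
    by (intro indep_vars_compose_restrict[OF indep_coef]) auto
  moreover have "(\<lambda>k \<omega>. coords k (restrict (\<lambda>c. coef_family \<delta> dI v c \<omega>) (day k)))
      = (\<lambda>k \<omega>. (\<delta> k \<omega>, dI k \<omega>, v k \<omega>))"
    by (simp add: fun_eq_iff coords_def day_def)
  ultimately show ?thesis
    by simp
qed

lemma
  fixes h :: "nat \<Rightarrow> real \<times> real \<times> real \<Rightarrow> real"
  assumes "finite S" "\<And>i. h i \<in> borel_measurable borel"
    and "\<And>i. integrable M (\<lambda>\<omega>. h i (\<delta> i \<omega>, dI i \<omega>, v i \<omega>))"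
  shows integrable_prod_days: "integrable M (\<lambda>\<omega>. \<Prod>i\<in>S. h i (\<delta> i \<omega>, dI i \<omega>, v i \<omega>))"
    and expectation_prod_days: "expectation (\<lambda>\<omega>. \<Prod>i\<in>S. h i (\<delta> i \<omega>, dI i \<omega>, v i \<omega>))
      = (\<Prod>i\<in>S. expectation (\<lambda>\<omega>. h i (\<delta> i \<omega>, dI i \<omega>, v i \<omega>)))"
proof -
  have indep: "indep_vars (\<lambda>_. borel) (\<lambda>i \<omega>. h i (\<delta> i \<omega>, dI i \<omega>, v i \<omega>)) S"
    by (rule indep_vars_subset[OF indep_vars_compose2[OF indep_vars_days assms(2)]]) simp
  show "integrable M (\<lambda>\<omega>. \<Prod>i\<in>S. h i (\<delta> i \<omega>, dI i \<omega>, v i \<omega>))"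
    by (rule indep_vars_integrable[OF assms(1) indep assms(3)])
  show "expectation (\<lambda>\<omega>. \<Prod>i\<in>S. h i (\<delta> i \<omega>, dI i \<omega>, v i \<omega>))
      = (\<Prod>i\<in>S. expectation (\<lambda>\<omega>. h i (\<delta> i \<omega>, dI i \<omega>, v i \<omega>)))"
    by (rule indep_vars_lebesgue_integral[OF assms(1) indep assms(3)])
qed

context
  fixes K db dIb vb :: real
  assumes integrable_coef:
      "\<And>k. integrable M (\<delta> k)" "\<And>k. integrable M (dI k)" "\<And>k. integrable M (v k)"
    and expectation_coef: "\<And>k. expectation (\<delta> k) = db" "\<And>k. expectation (dI k) = dIb"
      "\<And>k. expectation (v k) = vb"
begin

lemma integrable_daily_factor: "integrable M (daily_factor K \<delta> dI v k)"
  unfolding daily_factor_def using integrable_coef by simp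

lemma expectation_daily_factor: "expectation (daily_factor K \<delta> dI v k) = 1 + db - dIb - K * vb"
  unfolding daily_factor_def using integrable_coef
  by (simp add: expectation_coef prob_space)

lemma
  assumes "\<And>k \<omega>. u k \<omega> = K * epi_I \<delta> dI v u I0 k \<omega>"
  shows integrable_new_deaths: "integrable M (\<lambda>\<omega>. dI j \<omega> * epi_I \<delta> dI v u I0 j \<omega>)"
    and expectation_new_deaths:
      "expectation (\<lambda>\<omega>. dI j \<omega> * epi_I \<delta> dI v u I0 j \<omega>) = dIb * I0 * (1 + db - dIb - K * vb) ^ j"
proof -
  \<comment> \<open>Day \<open>i\<close> contributes its daily factor if \<open>i < j\<close> and its death rate if \<open>i = j\<close>,
    which writes \<open>d\<^sub>I(j) I(j)\<close> as \<open>I\<^sub>0\<close> times a product over distinct days.\<close>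
  define h where "h i x = (if i < j then 1 + fst x - K * snd (snd x) - fst (snd x) else fst (snd x))"
    for i and x :: "real \<times> real \<times> real"
  have h_day: "h i (\<delta> i \<omega>, dI i \<omega>, v i \<omega>) = (if i < j then daily_factor K \<delta> dI v i \<omega> else dI i \<omega>)"
    for i \<omega>
    by (simp add: h_def daily_factor_def)
  have h_measurable: "h i \<in> borel_measurable borel" for i
    unfolding h_def by (cases "i < j") (auto intro!: borel_measurable_continuous_onI continuous_intros)
  have h_integrable: "integrable M (\<lambda>\<omega>. h i (\<delta> i \<omega>, dI i \<omega>, v i \<omega>))" for i
    unfolding h_day by (cases "i < j") (simp_all add: integrable_daily_factor integrable_coef)
  have h_day_before: "(\<Prod>i<j. h i (\<delta> i \<omega>, dI i \<omega>, v i \<omega>)) = (\<Prod>i<j. daily_factor K \<delta> dI v i \<omega>)"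
    for \<omega>
    by (rule prod.cong) (simp_all add: h_day)
  have new_deaths_eq_prod:
    "dI j \<omega> * epi_I \<delta> dI v u I0 j \<omega> = I0 * (\<Prod>i<Suc j. h i (\<delta> i \<omega>, dI i \<omega>, v i \<omega>))" for \<omega>
    by (simp only: prod.lessThan_Suc h_day_before) (simp add: epi_I_linear_feedback[OF assms] h_day)
  have expectation_h: "expectation (\<lambda>\<omega>. h i (\<delta> i \<omega>, dI i \<omega>, v i \<omega>))
      = (if i < j then 1 + db - dIb - K * vb else dIb)" for i
    unfolding h_day by (cases "i < j") (simp_all add: expectation_daily_factor expectation_coef)
  have "(\<Prod>i<j. expectation (\<lambda>\<omega>. h i (\<delta> i \<omega>, dI i \<omega>, v i \<omega>))) = (1 + db - dIb - K * vb) ^ j"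
    unfolding expectation_h by simp
  then have "(\<Prod>i<Suc j. expectation (\<lambda>\<omega>. h i (\<delta> i \<omega>, dI i \<omega>, v i \<omega>)))
      = dIb * (1 + db - dIb - K * vb) ^ j"
    by (simp only: prod.lessThan_Suc) (simp add: expectation_h)
  then show "expectation (\<lambda>\<omega>. dI j \<omega> * epi_I \<delta> dI v u I0 j \<omega>) = dIb * I0 * (1 + db - dIb - K * vb) ^ j"
    unfolding new_deaths_eq_prod integral_mult_right_zero
    by (subst expectation_prod_days[OF _ h_measurable h_integrable]) simp_all
  show "integrable M (\<lambda>\<omega>. dI j \<omega> * epi_I \<delta> dI v u I0 j \<omega>)"
    unfolding new_deaths_eq_prod
    by (intro integrable_mult_right integrable_prod_days h_measurable h_integrable) simp
qed

lemma expectation_epi_D_linear_feedback: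
  assumes "\<And>k \<omega>. u k \<omega> = K * epi_I \<delta> dI v u I0 k \<omega>"
  shows "expectation (epi_D \<delta> dI v u I0 k) = dIb * I0 * (\<Sum>j<k. (1 + db - dIb - K * vb) ^ j)"
  unfolding epi_D_eq_sum
  by (simp add: Bochner_Integration.integral_sum integrable_new_deaths[OF assms]
      expectation_new_deaths[OF assms] sum_distrib_left)

end

end

end

theorem lemma11:
  fixes M :: "'a measure"
    and \<delta> dI v u :: "nat \<Rightarrow> 'a \<Rightarrow> real"
    and \<delta>max dmax vmin vmax S0 I0 K :: real
  assumes "prob_space M"
    and indep: "prob_space.indep_vars M (\<lambda>_. borel) (coef_family \<delta> dI v) UNIV"
    and iid_delta: "\<And>k. distr M borel (\<delta> k) = distr M borel (\<delta> 0)"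
    and iid_dI: "\<And>k. distr M borel (dI k) = distr M borel (dI 0)"
    and iid_v: "\<And>k. distr M borel (v k) = distr M borel (v 0)"
    and delta_bd: "\<And>k \<omega>. \<omega> \<in> space M \<Longrightarrow> 0 \<le> \<delta> k \<omega> \<and> \<delta> k \<omega> \<le> \<delta>max"
    and dI_bd: "\<And>k \<omega>. \<omega> \<in> space M \<Longrightarrow> 0 \<le> dI k \<omega> \<and> dI k \<omega> \<le> dmax"
    and dmax_lt: "dmax < 1"
    and v_bd: "\<And>k \<omega>. \<omega> \<in> space M \<Longrightarrow> vmin \<le> v k \<omega> \<and> v k \<omega> \<le> vmax"
    and vmin_pos: "0 < vmin" and vmax_le: "vmax \<le> 1"
    and I0_pos: "0 < I0" and S0_gt: "I0 * \<delta>max < S0"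
    and K_bd: "0 \<le> K" "K \<le> (1 - dmax) / vmax"
    and control: "\<And>k \<omega>. u k \<omega> = K * epi_I \<delta> dI v u I0 k \<omega>"
    and k_ge: "1 \<le> k"
  shows "let db = prob_space.expectation M (\<delta> 0);
             dIb = prob_space.expectation M (dI 0);
             vb = prob_space.expectation M (v 0);
             c = K * vb - db + dIb
         in (c > 0 \<longrightarrow> prob_space.expectation M (epi_D \<delta> dI v u I0 k)
                        = dIb * I0 * (1 - (1 + db - dIb - K * vb) ^ k) / c)
          \<and> (c = 0 \<longrightarrow> prob_space.expectation M (epi_D \<delta> dI v u I0 k) = dIb * I0 * real k)"
proof -
  interpret prob_space M by fact
  define db dIb vb where "db = expectation (\<delta> 0)" and "dIb = expectation (dI 0)"
    and "vb = expectation (v 0)"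
  note measurable = coef_measurable[OF indep]
  have bounded: "\<bar>\<delta> k \<omega>\<bar> \<le> \<delta>max" "\<bar>dI k \<omega>\<bar> \<le> dmax" "\<bar>v k \<omega>\<bar> \<le> vmax"
    if "\<omega> \<in> space M" for k \<omega>
    using delta_bd[OF that] dI_bd[OF that] v_bd[OF that, of k] vmin_pos by auto
  have integrable: "integrable M (\<delta> k)" "integrable M (dI k)" "integrable M (v k)" for k
    using bounded measurable
    by (auto intro!: integrable_const_bound AE_I2 simp del: abs_le_iff)
  have means: "expectation (\<delta> k) = db" "expectation (dI k) = dIb" "expectation (v k) = vb" for k
    unfolding db_def dIb_def vb_def using iid_delta iid_dI iid_v
    by (auto intro!: integral_eq_if_distr_eq measurable)
  have "expectation (epi_D \<delta> dI v u I0 k) = dIb * I0 * (\<Sum>j<k. (1 + db - dIb - K * vb) ^ j)"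
    by (rule expectation_epi_D_linear_feedback[OF indep integrable means control])
  then show ?thesis
    unfolding Let_def db_def[symmetric] dIb_def[symmetric] vb_def[symmetric]
    by (auto simp: sum_gp_strict)
qed

end
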